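(* For all probability measures $P,Q$, all $\alpha>0$ and all $\gamma\ge1$, writing $E:=E_\gamma(P\|Q)$: $$\mathscr{H}_\alpha(P\|Q)\ \ge\ \frac{1}{\alpha-1}\Bigl[\bigl(1+\tfrac{E}{\gamma}\bigr)^{1-\alpha} + \bigl(\tfrac{1-E}{\gamma}\bigr)^{1-\alpha} - 1 - \gamma^{\alpha-1}\Bigr]\quad(\alpha\ne1),$$ $$D(P\|Q)\ \ge\ -\ln\Bigl(\bigl(1+\tfrac{E}{\gamma}\bigr)(1-E)\Bigr)\quad(\text{in nats}),$$ and, for $\alpha\ne1$, $$D_\alpha(P\|Q)\ \ge\ \frac{1}{\alpha-1}\log\Bigl(\bigl(1+\tfrac{E}{\gamma}\bigr)^{1-\alpha}+\gamma^{\alpha-1}\bigl[(1-E)^{1-\alpha}-1\bigr]\Bigr),$$ while for $\alpha=1$, $D_1(P\|Q)=D(P\|Q)\ge -\log\bigl((1+\tfrac{E}{\gamma})(1-E)\bigr)$. (Expressions equal to $+\infty$ when $E=1$ and the corresponding power/logarithm diverges.)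
   Context: $\log$ is to an arbitrary fixed base, $\ln$ is the natural logarithm. For densities $p,q$ w.r.t. a dominating measure $\mu$: $E_\gamma(P\|Q):=\int(p-\gamma q)^+\,\mathrm{d}\mu$ for $\gamma\ge1$; the Hellinger divergence of order $\alpha\in(0,1)\cup(1,\infty)$ is $\mathscr{H}_\alpha(P\|Q):=D_{f_\alpha}(P\|Q)$ with $f_\alpha(t)=\frac{t^\alpha-1}{\alpha-1}$, where $D_f(P\|Q):=\int qf(p/q)\,\mathrm{d}\mu$ (standard conventions at $0$); $D(P\|Q)$ is the relative entropy $D_f$ with $f(t)=t\log t$; the Rényi divergence is $D_\alpha(P\|Q):=\frac{1}{\alpha-1}\log\bigl(1+(\alpha-1)\mathscr{H}_\alpha(P\|Q)\bigr)$ for $\alpha\neq1$, and $D_1:=D$. *)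

theory Defs
  imports "HOL-Analysis.Analysis"
begin

text \<open>Probability measures P, Q are given by densities p, q w.r.t. a dominating measure M.\<close>

definition E_gamma :: "'a measure \<Rightarrow> ('a \<Rightarrow> real) \<Rightarrow> ('a \<Rightarrow> real) \<Rightarrow> real \<Rightarrow> real" where
  "E_gamma M p q \<gamma> = integral\<^sup>L M (\<lambda>x. max 0 (p x - \<gamma> * q x))"

text \<open>Standard conventions at 0: f(0) := lim_{t->0+} f(t), 0 f(a/0) := a lim_{t->oo} f(t)/t.\<close>

definition f_zero :: "(real \<Rightarrow> real) \<Rightarrow> ereal" where
  "f_zero f = Lim (at_right 0) (\<lambda>t. ereal (f t))"

definition f_slope_inf :: "(real \<Rightarrow> real) \<Rightarrow> ereal" where
  "f_slope_inf f = Lim at_top (\<lambda>t. ereal (f t / t))"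

definition f_integrand :: "(real \<Rightarrow> real) \<Rightarrow> ('a \<Rightarrow> real) \<Rightarrow> ('a \<Rightarrow> real) \<Rightarrow> 'a \<Rightarrow> ereal" where
  "f_integrand f p q x =
     (if q x > 0 then (if p x > 0 then ereal (q x * f (p x / q x)) else ereal (q x) * f_zero f)
      else (if p x > 0 then ereal (p x) * f_slope_inf f else 0))"

definition f_div :: "(real \<Rightarrow> real) \<Rightarrow> 'a measure \<Rightarrow> ('a \<Rightarrow> real) \<Rightarrow> ('a \<Rightarrow> real) \<Rightarrow> ereal" where
  "f_div f M p q =
     enn2ereal (\<integral>\<^sup>+ x. e2ennreal (f_integrand f p q x) \<partial>M)
     - enn2ereal (\<integral>\<^sup>+ x. e2ennreal (- f_integrand f p q x) \<partial>M)"

definition hellinger :: "real \<Rightarrow> 'a measure \<Rightarrow> ('a \<Rightarrow> real) \<Rightarrow> ('a \<Rightarrow> real) \<Rightarrow> ereal" where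
  "hellinger \<alpha> = f_div (\<lambda>t. (t powr \<alpha> - 1) / (\<alpha> - 1))"

definition relent :: "real \<Rightarrow> 'a measure \<Rightarrow> ('a \<Rightarrow> real) \<Rightarrow> ('a \<Rightarrow> real) \<Rightarrow> ereal" where
  "relent b = f_div (\<lambda>t. t * log b t)"

text \<open>Renyi divergence D_alpha = 1/(alpha-1) log(1 + (alpha-1) H_alpha), with extended-real
  conventions: H = oo gives oo; log 0 = -oo, so a nonpositive argument (only possible for
  alpha < 1) gives +oo.\<close>
definition renyi :: "real \<Rightarrow> real \<Rightarrow> 'a measure \<Rightarrow> ('a \<Rightarrow> real) \<Rightarrow> ('a \<Rightarrow> real) \<Rightarrow> ereal" where
  "renyi b \<alpha> M p q =
     (if \<alpha> = 1 then relent b M p q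
      else (let H = hellinger \<alpha> M p q in
            if H = \<infinity> then \<infinity>
            else (let y = 1 + (\<alpha> - 1) * real_of_ereal H in
                  if y \<le> 0 then \<infinity> else ereal (log b y / (\<alpha> - 1)))))"

end

theory Submission
  imports Defs "HOL-Real_Asymp.Real_Asymp"
begin

text \<open>With the star conjugate \<open>f\<^sup>*(t) = t f(1/t)\<close> one has \<open>D\<^sub>f(P\<parallel>Q) = \<integral> p f\<^sup>*(q/p)\<close>. Split
  \<open>f\<^sup>*(t) = f\<^sup>*(min t (1/\<gamma>)) + f\<^sup>*(max t (1/\<gamma>)) - f\<^sup>*(1/\<gamma>)\<close>. Since
  \<open>p min (q/p) (1/\<gamma>) = (p - (p - \<gamma> q)\<^sup>+)/\<gamma>\<close>, the two truncated likelihood ratios have \<open>P\<close>-means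
  \<open>(1 - E)/\<gamma>\<close> and \<open>1 + E/\<gamma>\<close>, so Jensen's inequality for the convex \<open>f\<^sup>*\<close> (through its tangent
  lines at these means) gives \<open>D\<^sub>f \<ge> f\<^sup>*((1 - E)/\<gamma>) + f\<^sup>*(1 + E/\<gamma>) - f\<^sup>*(1/\<gamma>)\<close>. For the
  Hellinger generator and for \<open>t log t\<close> this is the stated bound, and the Renyi bound follows
  because \<open>D\<^sub>\<alpha>\<close> is an increasing function of \<open>H\<^sub>\<alpha>\<close>. If \<open>E = 1\<close>, then \<open>P\<close> and \<open>Q\<close> are mutually
  singular, which makes \<open>D\<close> and \<open>H\<^sub>\<alpha>\<close> for \<open>\<alpha> > 1\<close> infinite.\<close>

section \<open>Integrable minorants of \<open>f\<close>-divergences\<close>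

lemma ennreal_le_e2ennreal: "ereal r \<le> y \<Longrightarrow> ennreal r \<le> e2ennreal y"
  by (metis e2ennreal_ereal e2ennreal_mono)

lemma e2ennreal_uminus_le: "ereal r \<le> y \<Longrightarrow> e2ennreal (- y) \<le> ennreal (- r)"
  by (metis e2ennreal_ereal e2ennreal_mono ereal_minus_le_minus uminus_ereal.simps(1))

lemma enn2ereal_of_finite: "x < top \<Longrightarrow> enn2ereal x = ereal (enn2real x)"
  by (metis enn2ereal_ennreal enn2real_nonneg ennreal_enn2real)

lemma f_div_neg_part_finite:
  assumes "integrable M l" and "AE x in M. ereal (l x) \<le> f_integrand f p q x"
  shows "(\<integral>\<^sup>+ x. e2ennreal (- f_integrand f p q x) \<partial>M) < \<infinity>"
proof -
  have "(\<integral>\<^sup>+ x. e2ennreal (- f_integrand f p q x) \<partial>M) \<le> (\<integral>\<^sup>+ x. ennreal (- l x) \<partial>M)"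
    using assms(2) by (intro nn_integral_mono_AE) (auto elim: eventually_mono e2ennreal_uminus_le)
  also have "\<dots> < \<infinity>"
    using assms(1) by (simp add: real_integrable_def top.not_eq_extremum)
  finally show ?thesis .
qed

lemma f_div_ge_integral:
  assumes int: "integrable M l" and le: "AE x in M. ereal (l x) \<le> f_integrand f p q x"
  shows "ereal (integral\<^sup>L M l) \<le> f_div f M p q"
proof -
  define A where "A = (\<integral>\<^sup>+ x. ennreal (l x) \<partial>M)"
  define B where "B = (\<integral>\<^sup>+ x. ennreal (- l x) \<partial>M)"
  have "A < \<infinity>" "B < \<infinity>"
    using int by (simp_all add: A_def B_def real_integrable_def top.not_eq_extremum)
  then have "enn2ereal A = ereal (enn2real A)" "enn2ereal B = ereal (enn2real B)"
    by (simp_all add: enn2ereal_of_finite)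
  then have AB: "ereal (integral\<^sup>L M l) = enn2ereal A - enn2ereal B"
    unfolding real_lebesgue_integral_def[OF int] A_def B_def by simp
  have "A \<le> (\<integral>\<^sup>+ x. e2ennreal (f_integrand f p q x) \<partial>M)"
    unfolding A_def using le by (intro nn_integral_mono_AE) (auto elim: eventually_mono ennreal_le_e2ennreal)
  moreover have "(\<integral>\<^sup>+ x. e2ennreal (- f_integrand f p q x) \<partial>M) \<le> B"
    unfolding B_def using le by (intro nn_integral_mono_AE) (auto elim: eventually_mono e2ennreal_uminus_le)
  moreover note f_div_neg_part_finite[OF int le]
  ultimately show ?thesis
    unfolding AB f_div_def by (intro ereal_minus_mono) (simp_all add: less_eq_ennreal.rep_eq)
qed

lemma f_div_eq_PInf:
  assumes int: "integrable M l" and le: "AE x in M. ereal (l x) \<le> f_integrand f p q x"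
    and slope: "f_slope_inf f = \<infinity>" and disjoint: "AE x in M. p x = 0 \<or> q x = 0"
    and p_meas: "p \<in> borel_measurable M" and p_prob: "(\<integral>\<^sup>+ x. ennreal (p x) \<partial>M) = 1"
  shows "f_div f M p q = \<infinity>"
proof -
  have "top = (\<integral>\<^sup>+ x. top * ennreal (p x) \<partial>M)"
    using p_meas p_prob by (simp add: nn_integral_cmult)
  also have "\<dots> \<le> (\<integral>\<^sup>+ x. e2ennreal (f_integrand f p q x) \<partial>M)"
    using disjoint by (intro nn_integral_mono_AE)
      (auto elim!: eventually_mono simp: f_integrand_def slope not_less ennreal_neg)
  finally have "(\<integral>\<^sup>+ x. e2ennreal (f_integrand f p q x) \<partial>M) = top"
    by (simp add: top_unique)
  then show ?thesis
    using f_div_neg_part_finite[OF int le] by (simp add: f_div_def)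
qed

section \<open>The hockey-stick divergence of probability densities\<close>

lemma prob_density_integrable:
  assumes "p \<in> borel_measurable M" "\<And>x. x \<in> space M \<Longrightarrow> p x \<ge> 0"
    and "(\<integral>\<^sup>+ x. ennreal (p x) \<partial>M) = 1"
  shows "integrable M p" and "integral\<^sup>L M p = 1"
proof -
  show int: "integrable M p"
    using assms by (intro integrableI_nn_integral_finite[where x = 1]) auto
  have "ennreal (integral\<^sup>L M p) = 1"
    using assms nn_integral_eq_integral[OF int] by simp
  moreover have "integral\<^sup>L M p \<ge> 0"
    using assms(2) by (intro integral_nonneg_AE AE_I2) auto
  ultimately show "integral\<^sup>L M p = 1"
    by (simp add: ennreal_eq_1)
qed

locale prob_densities =
  fixes M :: "'a measure" and p q :: "'a \<Rightarrow> real"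
  assumes p_meas: "p \<in> borel_measurable M" and q_meas: "q \<in> borel_measurable M"
    and p_nonneg: "\<And>x. x \<in> space M \<Longrightarrow> p x \<ge> 0" and q_nonneg: "\<And>x. x \<in> space M \<Longrightarrow> q x \<ge> 0"
    and p_prob: "(\<integral>\<^sup>+ x. ennreal (p x) \<partial>M) = 1" and q_prob: "(\<integral>\<^sup>+ x. ennreal (q x) \<partial>M) = 1"
begin

lemma integrable_p: "integrable M p" and integral_p: "integral\<^sup>L M p = 1"
  using prob_density_integrable[OF p_meas p_nonneg p_prob] by auto

lemma integrable_q: "integrable M q" and integral_q: "integral\<^sup>L M q = 1"
  using prob_density_integrable[OF q_meas q_nonneg q_prob] by auto

lemma integrable_hinge: "integrable M (\<lambda>x. max 0 (p x - \<gamma> * q x))"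
  using integrable_p integrable_q by (intro integrable_max integrable_diff integrable_mult_right) auto

lemma E_gamma_nonneg: "0 \<le> E_gamma M p q \<gamma>"
  unfolding E_gamma_def by (intro integral_nonneg_AE AE_I2) auto

lemma E_gamma_le_1:
  assumes "\<gamma> \<ge> 0"
  shows "E_gamma M p q \<gamma> \<le> 1"
proof -
  have "E_gamma M p q \<gamma> \<le> integral\<^sup>L M p"
    unfolding E_gamma_def using integrable_hinge integrable_p
    by (intro integral_mono) (auto simp: assms p_nonneg q_nonneg)
  then show ?thesis
    by (simp add: integral_p)
qed

lemma E_gamma_eq_1_disjoint:
  assumes "\<gamma> > 0" and "E_gamma M p q \<gamma> = 1"
  shows "AE x in M. p x = 0 \<or> q x = 0"
proof -
  let ?r = "\<lambda>x. p x - max 0 (p x - \<gamma> * q x)"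
  have "integral\<^sup>L M ?r = 0"
    using assms(2) integrable_p integrable_hinge by (simp add: E_gamma_def integral_p)
  moreover have "AE x in M. 0 \<le> ?r x"
    using assms(1) by (intro AE_I2) (simp add: p_nonneg q_nonneg)
  ultimately have "AE x in M. ?r x = 0"
    using integral_nonneg_eq_0_iff_AE integrable_p integrable_hinge by blast
  then show ?thesis
    using assms(1) by (elim eventually_mono) (auto simp: max_def split: if_splits)
qed

end

section \<open>Splitting the star conjugate at \<open>1/\<gamma>\<close>\<close>

definition star_conjugate :: "(real \<Rightarrow> real) \<Rightarrow> real \<Rightarrow> real" where
  "star_conjugate f s = s * f (1 / s)"

lemma perspective_eq_star_conjugate:
  "u > 0 \<Longrightarrow> v > 0 \<Longrightarrow> v * f (u / v) = u * star_conjugate f (v / u)"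
  by (simp add: star_conjugate_def)

text \<open>For \<open>u > 0\<close> and \<open>w = (u - \<gamma> v)\<^sup>+\<close> one has \<open>(u - w) / \<gamma> = u min (v/u) (1/\<gamma>)\<close> and
  \<open>v + w / \<gamma> = u max (v/u) (1/\<gamma>)\<close>; so the split minorant is \<open>u\<close> times the tangent lines of \<open>\<phi>\<close>
  at \<open>c\<^sub>1 = (1 - E)/\<gamma>\<close> and \<open>c\<^sub>2 = 1 + E/\<gamma>\<close>, evaluated at these two points, minus \<open>\<phi> (1/\<gamma>)\<close>.
  It is linear in \<open>(u, v, w)\<close>, and the two points have \<open>P\<close>-means exactly \<open>c\<^sub>1\<close> and \<open>c\<^sub>2\<close>
  when \<open>E = E\<^sub>\<gamma>(P\<parallel>Q)\<close>.\<close>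
definition split_minorant ::
    "(real \<Rightarrow> real) \<Rightarrow> real \<Rightarrow> real \<Rightarrow> real \<Rightarrow> real \<Rightarrow> real \<Rightarrow> real \<Rightarrow> real" where
  "split_minorant \<phi> d\<^sub>1 d\<^sub>2 \<gamma> E u v =
     (let c\<^sub>1 = (1 - E) / \<gamma>; c\<^sub>2 = 1 + E / \<gamma>; w = max 0 (u - \<gamma> * v)
      in u * (\<phi> c\<^sub>1 - c\<^sub>1 * d\<^sub>1 + \<phi> c\<^sub>2 - c\<^sub>2 * d\<^sub>2 - \<phi> (1 / \<gamma>)) + d\<^sub>1 * ((u - w) / \<gamma>) + d\<^sub>2 * (v + w / \<gamma>))"

lemma split_minorant_le:
  assumes "\<gamma> > 0" "u > 0"
    and tangent\<^sub>1: "\<phi> ((1 - E) / \<gamma>) + d\<^sub>1 * (min (v / u) (1 / \<gamma>) - (1 - E) / \<gamma>) \<le> \<phi> (min (v / u) (1 / \<gamma>))"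
    and tangent\<^sub>2: "\<phi> (1 + E / \<gamma>) + d\<^sub>2 * (max (v / u) (1 / \<gamma>) - (1 + E / \<gamma>)) \<le> \<phi> (max (v / u) (1 / \<gamma>))"
  shows "split_minorant \<phi> d\<^sub>1 d\<^sub>2 \<gamma> E u v \<le> u * \<phi> (v / u)"
proof -
  let ?s = "min (v / u) (1 / \<gamma>)" and ?t = "max (v / u) (1 / \<gamma>)" and ?w = "max 0 (u - \<gamma> * v)"
  have split: "\<phi> (v / u) = \<phi> ?s + \<phi> ?t - \<phi> (1 / \<gamma>)"
    by (cases "v / u \<le> 1 / \<gamma>") (auto simp: min_def max_def)
  have "v / u \<le> 1 / \<gamma> \<longleftrightarrow> \<gamma> * v \<le> u"
    using assms(1,2) by (simp add: field_simps)
  then have s: "u * ?s = (u - ?w) / \<gamma>" and t: "u * ?t = v + ?w / \<gamma>"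
    using assms(1,2) by (auto simp: min_def max_def field_simps)
  have "split_minorant \<phi> d\<^sub>1 d\<^sub>2 \<gamma> E u v
      = u * (\<phi> ((1 - E) / \<gamma>) + d\<^sub>1 * (?s - (1 - E) / \<gamma>))
        + u * (\<phi> (1 + E / \<gamma>) + d\<^sub>2 * (?t - (1 + E / \<gamma>))) - u * \<phi> (1 / \<gamma>)"
    unfolding split_minorant_def Let_def s[symmetric] t[symmetric] by (simp add: algebra_simps)
  also have "\<dots> \<le> u * \<phi> ?s + u * \<phi> ?t - u * \<phi> (1 / \<gamma>)"
    using add_mono[OF mult_left_mono[OF tangent\<^sub>1] mult_left_mono[OF tangent\<^sub>2]] assms(2) by simp
  finally show ?thesis
    unfolding split by (simp add: algebra_simps)
qed

lemma split_minorant_0: "\<gamma> > 0 \<Longrightarrow> v \<ge> 0 \<Longrightarrow> split_minorant \<phi> d\<^sub>1 d\<^sub>2 \<gamma> E 0 v = d\<^sub>2 * v"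
  by (simp add: split_minorant_def)

text \<open>Off the common support the limits of \<open>f\<close> take over: where \<open>p = 0 < q\<close> the integrand is
  \<open>q f(0\<^sup>+)\<close>, and \<open>f(0\<^sup>+)\<close> is the slope of \<open>f\<^sup>*\<close> at infinity, hence dominates \<open>d\<^sub>2\<close>; where
  \<open>q = 0 < p\<close> and \<open>f_slope_inf f\<close> is finite, the tangent at \<open>c\<^sub>1\<close> is evaluated at \<open>0\<close>, where
  \<open>star_conjugate f 0 = 0\<close> is a junk value dominated by the slope.\<close>
lemma f_integrand_ge_split_minorant:
  assumes "\<gamma> > 0" "p x \<ge> 0" "q x \<ge> 0"
    and slope: "0 \<le> f_slope_inf f" and zero: "ereal d\<^sub>2 \<le> f_zero f"
    and tangent\<^sub>1: "p x > 0 \<Longrightarrow> q x > 0 \<or> f_slope_inf f < \<infinity> \<Longrightarrow>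
      star_conjugate f ((1 - E) / \<gamma>) + d\<^sub>1 * (min (q x / p x) (1 / \<gamma>) - (1 - E) / \<gamma>)
        \<le> star_conjugate f (min (q x / p x) (1 / \<gamma>))"
    and tangent\<^sub>2: "\<And>s. s > 0 \<Longrightarrow>
      star_conjugate f (1 + E / \<gamma>) + d\<^sub>2 * (s - (1 + E / \<gamma>)) \<le> star_conjugate f s"
  shows "ereal (split_minorant (star_conjugate f) d\<^sub>1 d\<^sub>2 \<gamma> E (p x) (q x)) \<le> f_integrand f p q x"
proof (cases "p x > 0")
  case p_pos: True
  have le: "split_minorant (star_conjugate f) d\<^sub>1 d\<^sub>2 \<gamma> E (p x) (q x) \<le> p x * star_conjugate f (q x / p x)"
    if "q x > 0 \<or> f_slope_inf f < \<infinity>"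
    using \<open>\<gamma> > 0\<close> by (intro split_minorant_le p_pos tangent\<^sub>1 that tangent\<^sub>2)
      (simp_all add: max.strict_coboundedI2)
  show ?thesis
  proof (cases "q x > 0")
    case True
    then have "f_integrand f p q x = ereal (p x * star_conjugate f (q x / p x))"
      using p_pos perspective_eq_star_conjugate[OF p_pos True, of f] by (simp add: f_integrand_def)
    then show ?thesis
      using le True by simp
  next
    case False
    then have "q x = 0"
      using \<open>q x \<ge> 0\<close> by simp
    show ?thesis
    proof (cases "f_slope_inf f = \<infinity>")
      case False
      then have "ereal (split_minorant (star_conjugate f) d\<^sub>1 d\<^sub>2 \<gamma> E (p x) (q x)) \<le> 0"
        using le \<open>q x = 0\<close> by (simp add: star_conjugate_def top.not_eq_extremum)
      also have "0 \<le> ereal (p x) * f_slope_inf f"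
        using p_pos slope by simp
      finally show ?thesis
        using p_pos \<open>q x = 0\<close> by (simp add: f_integrand_def)
    qed (use p_pos \<open>q x = 0\<close> in \<open>simp add: f_integrand_def\<close>)
  qed
next
  case False
  then have "p x = 0"
    using \<open>p x \<ge> 0\<close> by simp
  have "ereal (d\<^sub>2 * q x) \<le> ereal (q x) * f_zero f" if "q x > 0"
    using ereal_mult_left_mono[OF zero, of "ereal (q x)"] that by (simp add: mult.commute)
  then show ?thesis
    using \<open>p x = 0\<close> assms(1,3) by (simp add: split_minorant_0 f_integrand_def)
qed

context prob_densities
begin

lemma integrable_split_minorant: "integrable M (\<lambda>x. split_minorant \<phi> d\<^sub>1 d\<^sub>2 \<gamma> E (p x) (q x))"
  unfolding split_minorant_def Let_def using integrable_p integrable_q integrable_hinge by simp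

lemma integral_split_minorant:
  assumes E: "E = E_gamma M p q \<gamma>"
  shows "integral\<^sup>L M (\<lambda>x. split_minorant \<phi> d\<^sub>1 d\<^sub>2 \<gamma> E (p x) (q x))
    = \<phi> ((1 - E) / \<gamma>) + \<phi> (1 + E / \<gamma>) - \<phi> (1 / \<gamma>)"
proof -
  let ?c\<^sub>1 = "(1 - E) / \<gamma>" and ?c\<^sub>2 = "1 + E / \<gamma>"
  have "integral\<^sup>L M (\<lambda>x. split_minorant \<phi> d\<^sub>1 d\<^sub>2 \<gamma> E (p x) (q x))
      = (\<phi> ?c\<^sub>1 - ?c\<^sub>1 * d\<^sub>1 + \<phi> ?c\<^sub>2 - ?c\<^sub>2 * d\<^sub>2 - \<phi> (1 / \<gamma>)) + d\<^sub>1 * ?c\<^sub>1 + d\<^sub>2 * ?c\<^sub>2"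
    using integrable_p integrable_q integrable_hinge
    by (simp add: split_minorant_def Let_def integral_p integral_q E E_gamma_def diff_divide_distrib)
  then show ?thesis
    by (simp add: algebra_simps)
qed

lemma f_div_ge_split_bound:
  assumes "E = E_gamma M p q \<gamma>"
    and "AE x in M. ereal (split_minorant \<phi> d\<^sub>1 d\<^sub>2 \<gamma> E (p x) (q x)) \<le> f_integrand f p q x"
  shows "ereal (\<phi> ((1 - E) / \<gamma>) + \<phi> (1 + E / \<gamma>) - \<phi> (1 / \<gamma>)) \<le> f_div f M p q"
  using f_div_ge_integral[OF integrable_split_minorant assms(2)] integral_split_minorant[OF assms(1)]
  by simp

end

section \<open>Hellinger divergence\<close>

abbreviation hellinger_fn :: "real \<Rightarrow> real \<Rightarrow> real" where
  "hellinger_fn \<alpha> \<equiv> \<lambda>t. (t powr \<alpha> - 1) / (\<alpha> - 1)"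

lemma f_zero_hellinger_fn:
  assumes "\<alpha> > 0" "\<alpha> \<noteq> 1"
  shows "f_zero (hellinger_fn \<alpha>) = ereal (- 1 / (\<alpha> - 1))"
proof -
  have "((\<lambda>t::real. t powr \<alpha>) \<longlongrightarrow> 0) (at_right 0)"
    using assms by real_asymp
  then have "(hellinger_fn \<alpha> \<longlongrightarrow> (0 - 1) / (\<alpha> - 1)) (at_right 0)"
    by (intro tendsto_intros) (use assms in auto)
  then show ?thesis
    unfolding f_zero_def by (intro tendsto_Lim tendsto_ereal) auto
qed

lemma f_slope_inf_hellinger_fn_gt_1:
  assumes "\<alpha> > 1"
  shows "f_slope_inf (hellinger_fn \<alpha>) = \<infinity>"
proof -
  have "filterlim (\<lambda>t. hellinger_fn \<alpha> t / t) at_top at_top"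
    using assms by real_asymp
  then show ?thesis
    unfolding f_slope_inf_def by (intro tendsto_Lim) (simp_all add: tendsto_PInfty_eq_at_top)
qed

lemma f_slope_inf_hellinger_fn_lt_1:
  assumes "\<alpha> > 0" "\<alpha> < 1"
  shows "f_slope_inf (hellinger_fn \<alpha>) = 0"
proof -
  have "((\<lambda>t. hellinger_fn \<alpha> t / t) \<longlongrightarrow> 0) at_top"
    using assms by real_asymp
  then show ?thesis
    unfolding f_slope_inf_def zero_ereal_def by (intro tendsto_Lim tendsto_ereal) auto
qed

lemma star_conjugate_hellinger_fn:
  assumes "s \<ge> 0"
  shows "star_conjugate (hellinger_fn \<alpha>) s = (s powr (1 - \<alpha>) - s) / (\<alpha> - 1)"
proof (cases "s = 0")
  case False
  then have "s * (1 / s) powr \<alpha> = s powr (1 - \<alpha>)"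
    using assms by (simp add: powr_divide powr_diff)
  then show ?thesis
    by (simp add: star_conjugate_def right_diff_distrib)
qed (simp add: star_conjugate_def)

definition hellinger_star_deriv :: "real \<Rightarrow> real \<Rightarrow> real" where
  "hellinger_star_deriv \<alpha> c = - (c powr (- \<alpha>)) - 1 / (\<alpha> - 1)"

lemma hellinger_star_tangent_at_0:
  assumes "0 < \<alpha>" "\<alpha> < 1" "c > 0"
  shows "star_conjugate (hellinger_fn \<alpha>) c + hellinger_star_deriv \<alpha> c * (0 - c) \<le> 0"
proof -
  have "c * c powr (- \<alpha>) = c powr (1 - \<alpha>)"
    using assms(3) by (simp add: powr_diff powr_minus_divide)
  have "star_conjugate (hellinger_fn \<alpha>) c + hellinger_star_deriv \<alpha> c * (0 - c)
      = (c powr (1 - \<alpha>) - c) / (\<alpha> - 1) + c * c powr (- \<alpha>) + c / (\<alpha> - 1)"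
    using assms(3) by (simp add: star_conjugate_hellinger_fn hellinger_star_deriv_def algebra_simps)
  also have "\<dots> = c powr (1 - \<alpha>) / (\<alpha> - 1) + c powr (1 - \<alpha>)"
    using \<open>c * c powr (- \<alpha>) = c powr (1 - \<alpha>)\<close> by (simp add: diff_divide_distrib)
  also have "\<dots> = \<alpha> * c powr (1 - \<alpha>) / (\<alpha> - 1)"
    using assms(2) by (simp add: field_simps)
  also have "\<dots> \<le> 0"
    using assms(1,2) by (simp add: divide_nonneg_neg)
  finally show ?thesis .
qed

lemma hellinger_star_tangent:
  assumes "\<alpha> > 0" "\<alpha> \<noteq> 1" "c > 0" and s: "s > 0 \<or> (s = 0 \<and> \<alpha> < 1)"
  shows "star_conjugate (hellinger_fn \<alpha>) c + hellinger_star_deriv \<alpha> c * (s - c)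
    \<le> star_conjugate (hellinger_fn \<alpha>) s"
  using s
proof
  assume "s > 0"
  let ?g = "\<lambda>s. (s powr (1 - \<alpha>) - s) / (\<alpha> - 1)"
  have "hellinger_star_deriv \<alpha> c * (s - c) \<le> ?g s - ?g c"
  proof (rule f''_imp_f'[of "{0<..}" ?g "hellinger_star_deriv \<alpha>" "\<lambda>x. \<alpha> * x powr (- \<alpha> - 1)"])
    show "(?g has_real_derivative hellinger_star_deriv \<alpha> x) (at x)" if "x \<in> {0<..}" for x
    proof -
      have "(?g has_real_derivative ((1 - \<alpha>) * x powr (1 - \<alpha> - 1) - 1) / (\<alpha> - 1)) (at x)"
        using that assms(2) by (auto intro!: derivative_eq_intros)
      moreover have "((1 - \<alpha>) * x powr (1 - \<alpha> - 1) - 1) / (\<alpha> - 1) = hellinger_star_deriv \<alpha> x"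
        using assms(2) by (simp add: hellinger_star_deriv_def field_simps)
      ultimately show ?thesis
        by simp
    qed
    show "(hellinger_star_deriv \<alpha> has_real_derivative \<alpha> * x powr (- \<alpha> - 1)) (at x)" if "x \<in> {0<..}" for x
      using that unfolding hellinger_star_deriv_def[abs_def] by (auto intro!: derivative_eq_intros)
  qed (use assms \<open>s > 0\<close> in auto)
  then show ?thesis
    using assms(3) \<open>s > 0\<close> by (simp add: star_conjugate_hellinger_fn)
next
  assume "s = 0 \<and> \<alpha> < 1"
  then show ?thesis
    using hellinger_star_tangent_at_0[OF assms(1) _ assms(3)] by (simp add: star_conjugate_def)
qed

text \<open>For \<open>E = 1\<close> the tangent point \<open>c\<^sub>1 = 0\<close> has infinite slope; the slope \<open>0\<close> will do instead,
  because then \<open>p\<close> and \<open>q\<close> have disjoint supports almost everywhere and that tangent is only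
  evaluated at \<open>0\<close>.\<close>
lemma hellinger_integrand_ge_split_minorant:
  assumes "\<alpha> > 0" "\<alpha> \<noteq> 1" "\<gamma> > 0" "0 \<le> E" "E \<le> 1" "p x \<ge> 0" "q x \<ge> 0"
    and E_eq_1: "E = 1 \<Longrightarrow> \<alpha> < 1 \<and> (p x = 0 \<or> q x = 0)"
  shows "ereal (split_minorant (star_conjugate (hellinger_fn \<alpha>))
      (if E = 1 then 0 else hellinger_star_deriv \<alpha> ((1 - E) / \<gamma>)) (hellinger_star_deriv \<alpha> (1 + E / \<gamma>))
      \<gamma> E (p x) (q x)) \<le> f_integrand (hellinger_fn \<alpha>) p q x"
proof (rule f_integrand_ge_split_minorant)
  show "0 \<le> f_slope_inf (hellinger_fn \<alpha>)"
    using assms(1,2) f_slope_inf_hellinger_fn_gt_1 f_slope_inf_hellinger_fn_lt_1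
    by (cases "\<alpha> > 1") auto
  show "ereal (hellinger_star_deriv \<alpha> (1 + E / \<gamma>)) \<le> f_zero (hellinger_fn \<alpha>)"
    using assms(1,2) by (simp add: f_zero_hellinger_fn hellinger_star_deriv_def)
  have "1 + E / \<gamma> > 0"
    using assms(3,4) by (simp add: add_pos_nonneg)
  then show "star_conjugate (hellinger_fn \<alpha>) (1 + E / \<gamma>) + hellinger_star_deriv \<alpha> (1 + E / \<gamma>) * (s - (1 + E / \<gamma>))
      \<le> star_conjugate (hellinger_fn \<alpha>) s" if "s > 0" for s
    using that assms(1,2) by (intro hellinger_star_tangent) auto
  assume p_pos: "p x > 0" and q_pos_or_finite: "q x > 0 \<or> f_slope_inf (hellinger_fn \<alpha>) < \<infinity>"
  let ?s = "min (q x / p x) (1 / \<gamma>)"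
  show "star_conjugate (hellinger_fn \<alpha>) ((1 - E) / \<gamma>)
      + (if E = 1 then 0 else hellinger_star_deriv \<alpha> ((1 - E) / \<gamma>)) * (?s - (1 - E) / \<gamma>)
      \<le> star_conjugate (hellinger_fn \<alpha>) ?s"
  proof (cases "E = 1")
    case True
    then have "q x = 0"
      using E_eq_1 p_pos by auto
    then show ?thesis
      using True assms(3) by simp
  next
    case False
    have "?s > 0 \<or> (?s = 0 \<and> \<alpha> < 1)"
    proof (cases "q x > 0")
      case False
      then have "\<not> \<alpha> > 1"
        using q_pos_or_finite f_slope_inf_hellinger_fn_gt_1 by auto
      then show ?thesis
        using False assms(2,3,7) by auto
    qed (use p_pos assms(3) in simp)
    moreover have "(1 - E) / \<gamma> > 0"
      using False assms(3,5) by simp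
    ultimately show ?thesis
      using False assms(1,2) by (simp add: hellinger_star_tangent)
  qed
qed (use assms in auto)

lemma hellinger_split_value:
  assumes "\<gamma> > 0" "0 \<le> E" "E \<le> 1"
  shows "star_conjugate (hellinger_fn \<alpha>) ((1 - E) / \<gamma>) + star_conjugate (hellinger_fn \<alpha>) (1 + E / \<gamma>)
      - star_conjugate (hellinger_fn \<alpha>) (1 / \<gamma>)
    = 1 / (\<alpha> - 1) * ((1 + E / \<gamma>) powr (1 - \<alpha>) + ((1 - E) / \<gamma>) powr (1 - \<alpha>) - 1 - \<gamma> powr (\<alpha> - 1))"
proof -
  let ?c\<^sub>1 = "(1 - E) / \<gamma>" and ?c\<^sub>2 = "1 + E / \<gamma>"
  have c\<^sub>1: "star_conjugate (hellinger_fn \<alpha>) ?c\<^sub>1 = (?c\<^sub>1 powr (1 - \<alpha>) - ?c\<^sub>1) / (\<alpha> - 1)"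
    using assms by (intro star_conjugate_hellinger_fn) simp
  have "0 \<le> E / \<gamma> + 1"
    using assms by (simp add: field_simps)
  then have c\<^sub>2: "star_conjugate (hellinger_fn \<alpha>) ?c\<^sub>2 = (?c\<^sub>2 powr (1 - \<alpha>) - ?c\<^sub>2) / (\<alpha> - 1)"
    by (intro star_conjugate_hellinger_fn) simp
  have inv: "(1 / \<gamma>) powr (1 - \<alpha>) = \<gamma> powr (\<alpha> - 1)"
    using assms(1) by (simp add: powr_divide powr_minus_divide[symmetric])
  have sum: "?c\<^sub>1 + ?c\<^sub>2 - 1 = 1 / \<gamma>"
    using assms(1) by (simp add: field_simps)
  have c\<^sub>3: "star_conjugate (hellinger_fn \<alpha>) (1 / \<gamma>) = (\<gamma> powr (\<alpha> - 1) - (?c\<^sub>1 + ?c\<^sub>2 - 1)) / (\<alpha> - 1)"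
    unfolding sum inv[symmetric] using assms(1) by (intro star_conjugate_hellinger_fn) simp
  have "(A - c\<^sub>1) / k + (B - c\<^sub>2) / k - (G - (c\<^sub>1 + c\<^sub>2 - 1)) / k = 1 / k * (B + A - 1 - G)"
    for A B G c\<^sub>1 c\<^sub>2 k :: real
    by (simp add: divide_inverse algebra_simps)
  then show ?thesis
    unfolding c\<^sub>1 c\<^sub>2 c\<^sub>3 .
qed

context prob_densities
begin

lemma hellinger_ge:
  assumes "\<alpha> > 0" "\<alpha> \<noteq> 1" "\<gamma> \<ge> 1"
  shows "hellinger \<alpha> M p q \<ge>
    (let E = E_gamma M p q \<gamma> in
     if E = 1 \<and> \<alpha> > 1 then \<infinity>
     else ereal (1 / (\<alpha> - 1) * ((1 + E / \<gamma>) powr (1 - \<alpha>) + ((1 - E) / \<gamma>) powr (1 - \<alpha>)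
                                - 1 - \<gamma> powr (\<alpha> - 1))))"
proof -
  define E where "E = E_gamma M p q \<gamma>"
  have \<gamma>: "\<gamma> > 0"
    using assms(3) by simp
  have E: "0 \<le> E" "E \<le> 1"
    using E_gamma_nonneg E_gamma_le_1 assms(3) by (simp_all add: E_def)
  have hellinger: "hellinger \<alpha> M p q = f_div (hellinger_fn \<alpha>) M p q"
    by (simp add: hellinger_def)
  show ?thesis
  proof (cases "E = 1 \<and> \<alpha> > 1")
    case True
    have "AE x in M. ereal (split_minorant (star_conjugate (hellinger_fn \<alpha>))
        (hellinger_star_deriv \<alpha> (1 / \<gamma>)) (hellinger_star_deriv \<alpha> 1) \<gamma> 0 (p x) (q x))
      \<le> f_integrand (hellinger_fn \<alpha>) p q x"
      using hellinger_integrand_ge_split_minorant[where E = 0 and p = p and q = q, OF assms(1,2) \<gamma>]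
      by (intro AE_I2) (simp add: p_nonneg q_nonneg)
    then have "f_div (hellinger_fn \<alpha>) M p q = \<infinity>"
      using True E_gamma_eq_1_disjoint[OF \<gamma>] f_slope_inf_hellinger_fn_gt_1
      by (intro f_div_eq_PInf[OF integrable_split_minorant _ _ _ p_meas p_prob]) (auto simp: E_def)
    then show ?thesis
      by (simp add: hellinger)
  next
    case False
    have "AE x in M. E = 1 \<longrightarrow> p x = 0 \<or> q x = 0"
      using E_gamma_eq_1_disjoint[OF \<gamma>] by (cases "E = 1") (auto simp: E_def)
    then have "AE x in M. ereal (split_minorant (star_conjugate (hellinger_fn \<alpha>))
        (if E = 1 then 0 else hellinger_star_deriv \<alpha> ((1 - E) / \<gamma>)) (hellinger_star_deriv \<alpha> (1 + E / \<gamma>))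
        \<gamma> E (p x) (q x)) \<le> f_integrand (hellinger_fn \<alpha>) p q x"
      using AE_space
    proof eventually_elim
      case (elim x)
      then show ?case
        using False E assms(1,2) \<gamma> by (intro hellinger_integrand_ge_split_minorant) (auto simp: p_nonneg q_nonneg)
    qed
    from f_div_ge_split_bound[OF E_def this] show ?thesis
      using False E \<gamma> by (auto simp: hellinger hellinger_split_value Let_def simp flip: E_def)
  qed
qed

end

section \<open>Relative entropy\<close>

abbreviation relent_fn :: "real \<Rightarrow> real \<Rightarrow> real" where
  "relent_fn b \<equiv> \<lambda>t. t * log b t"

lemma f_zero_relent_fn:
  assumes "b > 1"
  shows "f_zero (relent_fn b) = 0"
proof -
  have "(relent_fn b \<longlongrightarrow> 0) (at_right 0)"
    using assms by real_asymp
  then show ?thesis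
    unfolding f_zero_def zero_ereal_def by (intro tendsto_Lim tendsto_ereal) auto
qed

lemma f_slope_inf_relent_fn:
  assumes "b > 1"
  shows "f_slope_inf (relent_fn b) = \<infinity>"
proof -
  have "filterlim (\<lambda>t. relent_fn b t / t) at_top at_top"
    using assms by real_asymp
  then show ?thesis
    unfolding f_slope_inf_def by (intro tendsto_Lim) (simp_all add: tendsto_PInfty_eq_at_top)
qed

lemma star_conjugate_relent_fn: "s \<ge> 0 \<Longrightarrow> star_conjugate (relent_fn b) s = - log b s"
  by (cases "s = 0") (simp_all add: star_conjugate_def log_recip, simp add: log_def)

lemma relent_star_tangent:
  assumes "b > 1" "c > 0" "s > 0"
  shows "star_conjugate (relent_fn b) c + - 1 / (c * ln b) * (s - c) \<le> star_conjugate (relent_fn b) s"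
proof -
  have "ln (s / c) \<le> s / c - 1"
    using assms by (intro ln_le_minus_one) simp
  then have "(ln s - ln c) / ln b \<le> (s - c) / c / ln b"
    using assms by (intro divide_right_mono) (simp_all add: ln_div diff_divide_distrib)
  then show ?thesis
    unfolding star_conjugate_relent_fn[OF less_imp_le, OF assms(2)] star_conjugate_relent_fn[OF less_imp_le, OF assms(3)]
    using assms by (simp add: log_def field_simps)
qed

lemma relent_integrand_ge_split_minorant:
  assumes "b > 1" "\<gamma> > 0" "0 \<le> E" "E < 1" "p x \<ge> 0" "q x \<ge> 0"
  shows "ereal (split_minorant (star_conjugate (relent_fn b))
      (- 1 / ((1 - E) / \<gamma> * ln b)) (- 1 / ((1 + E / \<gamma>) * ln b)) \<gamma> E (p x) (q x))
    \<le> f_integrand (relent_fn b) p q x"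
proof (rule f_integrand_ge_split_minorant)
  have "1 + E / \<gamma> > 0"
    using assms(2,3) by (simp add: add_pos_nonneg)
  then show "ereal (- 1 / ((1 + E / \<gamma>) * ln b)) \<le> f_zero (relent_fn b)"
    using assms(1) by (simp add: f_zero_relent_fn)
  show "star_conjugate (relent_fn b) (1 + E / \<gamma>) + - 1 / ((1 + E / \<gamma>) * ln b) * (s - (1 + E / \<gamma>))
      \<le> star_conjugate (relent_fn b) s" if "s > 0" for s
    using assms(1) \<open>1 + E / \<gamma> > 0\<close> that by (rule relent_star_tangent)
  assume "p x > 0" and "q x > 0 \<or> f_slope_inf (relent_fn b) < \<infinity>"
  then have "min (q x / p x) (1 / \<gamma>) > 0"
    using assms(1,2) by (simp add: f_slope_inf_relent_fn)
  moreover have "(1 - E) / \<gamma> > 0"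
    using assms(2,4) by simp
  ultimately show "star_conjugate (relent_fn b) ((1 - E) / \<gamma>)
      + - 1 / ((1 - E) / \<gamma> * ln b) * (min (q x / p x) (1 / \<gamma>) - (1 - E) / \<gamma>)
      \<le> star_conjugate (relent_fn b) (min (q x / p x) (1 / \<gamma>))"
    using assms(1) by (intro relent_star_tangent)
qed (use assms f_slope_inf_relent_fn in auto)

lemma relent_split_value:
  assumes "b > 1" "\<gamma> > 0" "0 \<le> E" "E < 1"
  shows "star_conjugate (relent_fn b) ((1 - E) / \<gamma>) + star_conjugate (relent_fn b) (1 + E / \<gamma>)
      - star_conjugate (relent_fn b) (1 / \<gamma>) = - log b ((1 + E / \<gamma>) * (1 - E))"
proof -
  have "1 + E / \<gamma> > 0"
    using assms(2,3) by (simp add: add_pos_nonneg)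
  then show ?thesis
    using assms by (simp add: star_conjugate_relent_fn log_mult log_divide)
qed

context prob_densities
begin

lemma relent_ge:
  assumes "b > 1" "\<gamma> \<ge> 1"
  shows "relent b M p q \<ge>
    (let E = E_gamma M p q \<gamma> in if E = 1 then \<infinity> else ereal (- log b ((1 + E / \<gamma>) * (1 - E))))"
proof -
  define E where "E = E_gamma M p q \<gamma>"
  have \<gamma>: "\<gamma> > 0"
    using assms(2) by simp
  have E: "0 \<le> E" "E \<le> 1"
    using E_gamma_nonneg E_gamma_le_1 assms(2) by (simp_all add: E_def)
  have relent: "relent b M p q = f_div (relent_fn b) M p q"
    by (simp add: relent_def)
  show ?thesis
  proof (cases "E = 1")
    case True
    have "AE x in M. ereal (split_minorant (star_conjugate (relent_fn b))
        (- 1 / (1 / \<gamma> * ln b)) (- 1 / (1 * ln b)) \<gamma> 0 (p x) (q x)) \<le> f_integrand (relent_fn b) p q x"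
      using relent_integrand_ge_split_minorant[where E = 0 and p = p and q = q, OF assms(1) \<gamma>]
      by (intro AE_I2) (simp add: p_nonneg q_nonneg)
    then have "f_div (relent_fn b) M p q = \<infinity>"
      using True E_gamma_eq_1_disjoint[OF \<gamma>] f_slope_inf_relent_fn[OF assms(1)]
      by (intro f_div_eq_PInf[OF integrable_split_minorant _ _ _ p_meas p_prob]) (auto simp: E_def)
    then show ?thesis
      by (simp add: relent)
  next
    case False
    have "AE x in M. ereal (split_minorant (star_conjugate (relent_fn b))
        (- 1 / ((1 - E) / \<gamma> * ln b)) (- 1 / ((1 + E / \<gamma>) * ln b)) \<gamma> E (p x) (q x))
      \<le> f_integrand (relent_fn b) p q x"
      using False E assms(1) \<gamma>
      by (intro AE_I2 relent_integrand_ge_split_minorant) (auto simp: p_nonneg q_nonneg)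
    from f_div_ge_split_bound[OF E_def this] show ?thesis
      using False E assms(1) \<gamma> by (simp add: relent relent_split_value Let_def flip: E_def)
  qed
qed

end

section \<open>Renyi divergence\<close>

lemma renyi_ge_of_hellinger_ge:
  assumes "b > 1" "\<alpha> \<noteq> 1" and hellinger: "hellinger \<alpha> M p q \<ge> ereal \<beta>"
    and pos: "\<alpha> > 1 \<Longrightarrow> 1 + (\<alpha> - 1) * \<beta> > 0"
  shows "renyi b \<alpha> M p q \<ge> ereal (log b (1 + (\<alpha> - 1) * \<beta>) / (\<alpha> - 1))"
proof (cases "hellinger \<alpha> M p q = \<infinity>")
  case False
  with hellinger obtain h where h: "hellinger \<alpha> M p q = ereal h" and "\<beta> \<le> h"
    by (cases "hellinger \<alpha> M p q") auto
  define y where "y = 1 + (\<alpha> - 1) * h"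
  have renyi: "renyi b \<alpha> M p q = (if y \<le> 0 then \<infinity> else ereal (log b y / (\<alpha> - 1)))"
    using assms(2) by (simp add: renyi_def h y_def)
  show ?thesis
  proof (cases "\<alpha> > 1")
    case True
    then have "1 + (\<alpha> - 1) * \<beta> \<le> y"
      using \<open>\<beta> \<le> h\<close> by (simp add: y_def)
    then show ?thesis
      using True pos assms(1) by (simp add: renyi divide_right_mono)
  next
    case False
    then have "\<alpha> < 1"
      using assms(2) by simp
    then have "y \<le> 1 + (\<alpha> - 1) * \<beta>"
      using \<open>\<beta> \<le> h\<close> by (simp add: y_def mult_left_mono_neg)
    then show ?thesis
      using \<open>\<alpha> < 1\<close> assms(1) by (simp add: renyi divide_right_mono_neg)
  qed
qed (use assms(2) in \<open>simp add: renyi_def\<close>)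

lemma hellinger_bound_renyi_arg:
  fixes \<alpha> \<gamma> E :: real
  assumes "\<alpha> \<noteq> 1"
  shows "1 + (\<alpha> - 1) * (1 / (\<alpha> - 1) * ((1 + E / \<gamma>) powr (1 - \<alpha>) + ((1 - E) / \<gamma>) powr (1 - \<alpha>)
      - 1 - \<gamma> powr (\<alpha> - 1)))
    = (1 + E / \<gamma>) powr (1 - \<alpha>) + \<gamma> powr (\<alpha> - 1) * ((1 - E) powr (1 - \<alpha>) - 1)"
proof -
  have cancel: "(\<alpha> - 1) * (1 / (\<alpha> - 1) * Y) = Y" for Y
    using assms by simp
  have "((1 - E) / \<gamma>) powr (1 - \<alpha>) = (1 - E) powr (1 - \<alpha>) * \<gamma> powr (\<alpha> - 1)"
    using powr_minus[of \<gamma> "1 - \<alpha>"] by (simp add: divide_inverse powr_mult inverse_powr)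
  then show ?thesis
    unfolding cancel by (simp add: algebra_simps)
qed

lemma renyi_arg_pos:
  fixes \<alpha> \<gamma> E :: real
  assumes "\<alpha> > 1" "\<gamma> > 0" "0 \<le> E" "E < 1"
  shows "(1 + E / \<gamma>) powr (1 - \<alpha>) + \<gamma> powr (\<alpha> - 1) * ((1 - E) powr (1 - \<alpha>) - 1) > 0"
proof -
  have "(1 - E) powr (1 - \<alpha>) \<ge> 1"
    using powr_mono2'[of "1 - \<alpha>" "1 - E" 1] assms by simp
  moreover have "1 + E / \<gamma> > 0"
    using assms(2,3) by (simp add: add_pos_nonneg)
  ultimately show ?thesis
    by (simp add: add_pos_nonneg)
qed

context prob_densities
begin

lemma renyi_ge:
  assumes "b > 1" "\<alpha> > 0" "\<alpha> \<noteq> 1" "\<gamma> \<ge> 1"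
  shows "renyi b \<alpha> M p q \<ge>
    (let E = E_gamma M p q \<gamma> in
     if E = 1 \<and> \<alpha> > 1 then \<infinity>
     else ereal (1 / (\<alpha> - 1) * log b ((1 + E / \<gamma>) powr (1 - \<alpha>)
                                + \<gamma> powr (\<alpha> - 1) * ((1 - E) powr (1 - \<alpha>) - 1))))"
proof -
  define E where "E = E_gamma M p q \<gamma>"
  have E: "0 \<le> E" "E \<le> 1"
    using E_gamma_nonneg E_gamma_le_1 assms(4) by (simp_all add: E_def)
  note hellinger = hellinger_ge[OF assms(2-4), unfolded Let_def, folded E_def]
  show ?thesis
  proof (cases "E = 1 \<and> \<alpha> > 1")
    case True
    then show ?thesis
      using hellinger by (simp add: renyi_def Let_def flip: E_def)
  next
    case False
    define \<beta> where "\<beta> = 1 / (\<alpha> - 1) * ((1 + E / \<gamma>) powr (1 - \<alpha>) + ((1 - E) / \<gamma>) powr (1 - \<alpha>)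
      - 1 - \<gamma> powr (\<alpha> - 1))"
    have "1 + (\<alpha> - 1) * \<beta> > 0" if "\<alpha> > 1"
      using False E that assms(4)
      unfolding \<beta>_def hellinger_bound_renyi_arg[OF assms(3)] by (intro renyi_arg_pos) auto
    with hellinger False have "renyi b \<alpha> M p q \<ge> ereal (log b (1 + (\<alpha> - 1) * \<beta>) / (\<alpha> - 1))"
      by (intro renyi_ge_of_hellinger_ge assms) (simp_all add: \<beta>_def)
    then show ?thesis
      using False unfolding \<beta>_def hellinger_bound_renyi_arg[OF assms(3)] by (auto simp: Let_def simp flip: E_def)
  qed
qed

end

theorem corollary2:
  fixes M :: "'a measure" and p q :: "'a \<Rightarrow> real" and b \<alpha> \<gamma> :: real
  assumes b: "b > 1"
    and alpha: "\<alpha> > 0" and gamma: "\<gamma> \<ge> 1"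
    and p_meas: "p \<in> borel_measurable M" and q_meas: "q \<in> borel_measurable M"
    and p_nn: "\<And>x. x \<in> space M \<Longrightarrow> p x \<ge> 0" and q_nn: "\<And>x. x \<in> space M \<Longrightarrow> q x \<ge> 0"
    and p_prob: "(\<integral>\<^sup>+ x. ennreal (p x) \<partial>M) = 1" and q_prob: "(\<integral>\<^sup>+ x. ennreal (q x) \<partial>M) = 1"
  shows
    "(\<alpha> \<noteq> 1 \<longrightarrow>
       hellinger \<alpha> M p q \<ge>
         (let E = E_gamma M p q \<gamma> in
          if E = 1 \<and> \<alpha> > 1 then \<infinity>
          else ereal (1 / (\<alpha> - 1) * ((1 + E / \<gamma>) powr (1 - \<alpha>) + ((1 - E) / \<gamma>) powr (1 - \<alpha>)
                                     - 1 - \<gamma> powr (\<alpha> - 1)))))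
     \<and> (relent (exp 1) M p q \<ge>
         (let E = E_gamma M p q \<gamma> in
          if E = 1 then \<infinity> else ereal (- ln ((1 + E / \<gamma>) * (1 - E)))))
     \<and> (\<alpha> \<noteq> 1 \<longrightarrow>
       renyi b \<alpha> M p q \<ge>
         (let E = E_gamma M p q \<gamma> in
          if E = 1 \<and> \<alpha> > 1 then \<infinity>
          else ereal (1 / (\<alpha> - 1) * log b ((1 + E / \<gamma>) powr (1 - \<alpha>)
                                     + \<gamma> powr (\<alpha> - 1) * ((1 - E) powr (1 - \<alpha>) - 1)))))
     \<and> (\<alpha> = 1 \<longrightarrow>
       renyi b \<alpha> M p q = relent b M p q \<and>
       relent b M p q \<ge>
         (let E = E_gamma M p q \<gamma> in
          if E = 1 then \<infinity> else ereal (- log b ((1 + E / \<gamma>) * (1 - E)))))"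
proof -
  interpret prob_densities M p q
    using p_meas q_meas p_nn q_nn p_prob q_prob by unfold_locales
  have log_exp_1: "log (exp 1) x = ln x" for x
    by (simp add: log_ln)
  show ?thesis
  proof (intro conjI impI)
    show "relent (exp 1) M p q \<ge>
        (let E = E_gamma M p q \<gamma> in if E = 1 then \<infinity> else ereal (- ln ((1 + E / \<gamma>) * (1 - E))))"
      using relent_ge[OF _ gamma, of "exp 1"] by (simp only: log_exp_1 one_less_exp_iff zero_less_one)
    show "renyi b \<alpha> M p q = relent b M p q" if "\<alpha> = 1"
      using that by (simp add: renyi_def)
  qed (use hellinger_ge[OF alpha _ gamma] renyi_ge[OF b alpha _ gamma] relent_ge[OF b gamma] in auto)
qed

end
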